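(* Let $K$ be a locally compact hypergroup with a left Haar measure and let $\sigma$ be a non-degenerate probability measure on $K$. Then every bounded continuous $\sigma$-harmonic function on $K$ vanishing at infinity is constant.
   Context: $K$ is a locally compact hypergroup (Jewett/Bloom–Heyer sense) with involution $x\mapsto\check x$, assumed to have a left Haar measure. For a Borel function $f$, $f(x*y)=\int_K f\,d(\delta_x*\delta_y)$, and for $\mu\in M(K)$, $(\mu*f)(x)=\int_K f(\check y*x)\,d\mu(y)$; $f$ is $\sigma$-harmonic if $\sigma*f=f$. For subsets $A,B\subseteq K$, $A*B=\bigcup_{a\in A,b\in B}\operatorname{supp}(\delta_a*\delta_b)$ and $A^n$ is the $n$-fold product. A measure $\mu\in M(K)$ is non-degenerate if $K=\overline{\bigcup_{n\geq1}(\operatorname{supp}|\mu|)^n}$. *)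

theory Defs
  imports "HOL-Probability.Probability"
begin

definition msupp :: "'a::topological_space measure \<Rightarrow> 'a set" where
  "msupp \<mu> = {x. \<forall>U. open U \<longrightarrow> x \<in> U \<longrightarrow> emeasure \<mu> U > 0}"

text \<open>f(x*y) = integral of f against delta_x * delta_y; here conv x y models delta_x * delta_y.\<close>
definition hval :: "('a::topological_space \<Rightarrow> 'a \<Rightarrow> 'a measure) \<Rightarrow> ('a \<Rightarrow> complex) \<Rightarrow> 'a \<Rightarrow> 'a \<Rightarrow> complex" where
  "hval conv f x y = (\<integral>z. f z \<partial>(conv x y))"

definition bcontinuous :: "('a::topological_space \<Rightarrow> real) \<Rightarrow> bool" where
  "bcontinuous f \<longleftrightarrow> continuous_on UNIV f \<and> bounded (range f)"

text \<open>Jewett / Bloom--Heyer axioms for a locally compact hypergroup, expressed via the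
  convolution of point masses conv x y = delta_x * delta_y, the involution invol and identity e.
  (The convolution on M(K) is determined by the point-mass convolutions.)\<close>
definition hypergroup :: "('a::t2_space \<Rightarrow> 'a \<Rightarrow> 'a measure) \<Rightarrow> ('a \<Rightarrow> 'a) \<Rightarrow> 'a \<Rightarrow> bool" where
  "hypergroup conv invol e \<longleftrightarrow>
     locally_compact_space (euclidean :: 'a topology) \<and>
     \<comment> \<open>delta_x * delta_y is a Borel probability measure with compact support\<close>
     (\<forall>x y. sets (conv x y) = sets borel \<and> prob_space (conv x y) \<and> compact (msupp (conv x y))) \<and>
     \<comment> \<open>associativity\<close>
     (\<forall>x y w f. bcontinuous f \<longrightarrow>
        (\<integral>z. (\<integral>u. f u \<partial>(conv z w)) \<partial>(conv x y)) =
        (\<integral>z. (\<integral>u. f u \<partial>(conv x z)) \<partial>(conv y w))) \<and>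
     \<comment> \<open>weak continuity of (x,y) to delta_x * delta_y\<close>
     (\<forall>f. bcontinuous f \<longrightarrow> continuous_on UNIV (\<lambda>p. \<integral>z. f z \<partial>(conv (fst p) (snd p)))) \<and>
     \<comment> \<open>continuity of (x,y) to supp(delta_x * delta_y) for the Michael topology\<close>
     (\<forall>U. open U \<longrightarrow> open {p. msupp (conv (fst p) (snd p)) \<inter> U \<noteq> {}}
                    \<and> open {p. msupp (conv (fst p) (snd p)) \<subseteq> U}) \<and>
     \<comment> \<open>identity\<close>
     (\<forall>x. conv e x = return borel x \<and> conv x e = return borel x) \<and>
     \<comment> \<open>involution: homeomorphism of order 2, anti-automorphism of convolution\<close>
     continuous_on UNIV invol \<and> (\<forall>x. invol (invol x) = x) \<and>
     (\<forall>x y. distr (conv x y) borel invol = conv (invol y) (invol x)) \<and>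
     \<comment> \<open>e in supp(delta_x * delta_(invol y)) iff x = y\<close>
     (\<forall>x y. e \<in> msupp (conv x (invol y)) \<longleftrightarrow> x = y)"

definition left_haar :: "('a::t2_space \<Rightarrow> 'a \<Rightarrow> 'a measure) \<Rightarrow> 'a measure \<Rightarrow> bool" where
  "left_haar conv haar \<longleftrightarrow>
     sets haar = sets borel \<and> emeasure haar UNIV \<noteq> 0 \<and>
     (\<forall>C. compact C \<longrightarrow> emeasure haar C < \<infinity>) \<and>
     (\<forall>U. open U \<longrightarrow> U \<noteq> {} \<longrightarrow> emeasure haar U > 0) \<and>
     (\<forall>f::'a \<Rightarrow> real. continuous_on UNIV f \<longrightarrow> compact (closure {x. f x \<noteq> 0}) \<longrightarrow>
        (\<forall>x. (\<integral>y. (\<integral>z. f z \<partial>(conv x y)) \<partial>haar) = (\<integral>y. f y \<partial>haar)))"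

definition hset_prod :: "('a::topological_space \<Rightarrow> 'a \<Rightarrow> 'a measure) \<Rightarrow> 'a set \<Rightarrow> 'a set \<Rightarrow> 'a set" where
  "hset_prod conv A B = (\<Union>a\<in>A. \<Union>b\<in>B. msupp (conv a b))"

fun hset_pow :: "('a::topological_space \<Rightarrow> 'a \<Rightarrow> 'a measure) \<Rightarrow> 'a set \<Rightarrow> nat \<Rightarrow> 'a set" where
  "hset_pow conv A 0 = A"   \<comment> \<open>unused: only n >= 1 is used\<close>
| "hset_pow conv A (Suc 0) = A"
| "hset_pow conv A (Suc (Suc n)) = hset_prod conv (hset_pow conv A (Suc n)) A"

definition nondegenerate :: "('a::topological_space \<Rightarrow> 'a \<Rightarrow> 'a measure) \<Rightarrow> 'a measure \<Rightarrow> bool" where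
  "nondegenerate conv \<sigma> \<longleftrightarrow> UNIV = closure (\<Union>n\<in>{1..}. hset_pow conv (msupp \<sigma>) n)"

definition harmonic :: "('a::topological_space \<Rightarrow> 'a \<Rightarrow> 'a measure) \<Rightarrow> ('a \<Rightarrow> 'a) \<Rightarrow> 'a measure \<Rightarrow> ('a \<Rightarrow> complex) \<Rightarrow> bool" where
  "harmonic conv invol \<sigma> f \<longleftrightarrow> (\<forall>x. (\<integral>y. hval conv f (invol y) x \<partial>\<sigma>) = f x)"

definition vanishes_at_infinity :: "('a::topological_space \<Rightarrow> complex) \<Rightarrow> bool" where
  "vanishes_at_infinity f \<longleftrightarrow> (\<forall>\<epsilon>>0. \<exists>C. compact C \<and> (\<forall>x. x \<notin> C \<longrightarrow> norm (f x) < \<epsilon>))"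

end

theory Submission
  imports Defs
begin

text \<open>The argument is a maximum principle. For a nonnegative bounded continuous \<sigma>-harmonic \<open>h\<close>
  with zero set \<open>Z\<close>, the set of \<open>t\<close> with \<open>{t} * Z \<subseteq> Z\<close> is closed, contains the involuted support of \<sigma> (by
  harmonicity, since \<open>h z = \<integral> h(y\<^sup>\<or> * z) d\<sigma>(y)\<close> is an average of nonnegative values), and is
  closed under hypergroup products (by associativity). Since the involution reverses products,
  non-degeneracy of \<sigma> makes this set all of \<open>K\<close>. If \<open>h\<close> has a zero \<open>x\<^sub>0\<close>, associativity then gives
  \<open>h(x * u) = 0\<close> on the support of \<open>\<delta>\<^bsub>x\<^sub>0\<^sup>\<or>\<^esub> * \<delta>\<^bsub>x\<^sub>0\<^esub>\<close>, which contains \<open>e\<close>, so \<open>h(x) = 0\<close>.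
  For \<open>f\<close> as in the theorem, \<open>|f|\<close> attains its maximum at some \<open>x\<^sub>0\<close> because \<open>f\<close> vanishes at infinity;
  with \<open>c = f x\<^sub>0\<close>, the principle applied to \<open>|c|\<^sup>2 - Re (c\<^sup>* f)\<close> gives \<open>Re (c\<^sup>* f) = |c|\<^sup>2\<close>, which
  together with \<open>|f| \<le> |c|\<close> forces \<open>f = c\<close>.\<close>

lemma borel_measurable_continuous_on_UNIV:
  "continuous_on UNIV g \<Longrightarrow> sets M = sets borel \<Longrightarrow> g \<in> borel_measurable M"
  using borel_measurable_continuous_onI measurable_cong_sets by blast

lemma integrable_bounded_continuous:
  fixes g :: "'a::topological_space \<Rightarrow> 'b::{banach,second_countable_topology}"
  assumes "prob_space M" "sets M = sets borel" "continuous_on UNIV g" "bounded (range g)"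
  shows "integrable M g"
proof -
  interpret prob_space M by fact
  obtain B where "\<And>x. norm (g x) \<le> B" using assms(4) by (auto simp: bounded_iff)
  then show ?thesis
    by (intro integrable_const_bound[where B=B] borel_measurable_continuous_on_UNIV assms(2,3)) auto
qed

lemma (in prob_space) norm_integral_le_const:
  fixes g :: "'a \<Rightarrow> 'b::{banach,second_countable_topology}"
  assumes "integrable M g" "\<And>x. norm (g x) \<le> B"
  shows "norm (integral\<^sup>L M g) \<le> B"
proof -
  have "norm (integral\<^sup>L M g) \<le> (\<integral>x. norm (g x) \<partial>M)" by (rule integral_norm_bound)
  also have "\<dots> \<le> B" using assms by (intro integral_le_const) auto
  finally show ?thesis .
qed

lemma bcontinuous_bounded_linear_comp:
  assumes "continuous_on UNIV f" "bounded (range f)" "bounded_linear T"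
  shows "bcontinuous (\<lambda>x. T (f x))"
proof -
  have "range (\<lambda>x. T (f x)) = T ` range f" by auto
  then show ?thesis
    using assms bounded_linear_image[OF assms(2,3)]
    by (simp add: bcontinuous_def bounded_linear.continuous_on)
qed

lemma bcontinuous_vanishes_on_msupp:
  fixes k :: "'a::topological_space \<Rightarrow> real"
  assumes "prob_space M" "sets M = sets borel" "bcontinuous k" "\<And>y. k y \<ge> 0"
    and "integral\<^sup>L M k = 0" "x \<in> msupp M"
  shows "k x = 0"
proof (rule ccontr)
  assume "k x \<noteq> 0"
  with assms(4) have kx: "k x > 0" by (simp add: order_less_le)
  let ?U = "{y. k x / 2 < k y}"
  have "integrable M k"
    using assms(3) by (intro integrable_bounded_continuous assms(1,2)) (auto simp: bcontinuous_def)
  then have "AE y in M. k y = 0"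
    using integral_nonneg_eq_0_iff_AE assms(4,5) by auto
  then have "AE y in M. y \<notin> ?U" by eventually_elim (use kx in auto)
  moreover have "open ?U"
    using assms(3) by (intro open_Collect_less continuous_intros) (auto simp: bcontinuous_def)
  ultimately have "emeasure M ?U = 0"
    using AE_iff_null_sets[of ?U M] assms(2) by auto
  moreover have "emeasure M ?U > 0"
    using assms(6) \<open>open ?U\<close> kx unfolding msupp_def by auto
  ultimately show False by simp
qed

lemma vanishes_at_infinity_norm_attains_max:
  assumes "continuous_on UNIV f" "vanishes_at_infinity f"
  shows "\<exists>x\<^sub>0. \<forall>y. norm (f y) \<le> norm (f x\<^sub>0)"
proof (cases "\<exists>x\<^sub>1. f x\<^sub>1 \<noteq> 0")
  case False
  then show ?thesis by auto
next
  case True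
  then obtain x\<^sub>1 where "norm (f x\<^sub>1) > 0" by auto
  with assms(2) obtain C where C: "compact C" "\<And>x. x \<notin> C \<Longrightarrow> norm (f x) < norm (f x\<^sub>1)"
    unfolding vanishes_at_infinity_def by blast
  then have "x\<^sub>1 \<in> C" by force
  then obtain x\<^sub>0 where x\<^sub>0: "\<And>y. y \<in> C \<Longrightarrow> norm (f y) \<le> norm (f x\<^sub>0)"
    using continuous_attains_sup[OF C(1), of "\<lambda>x. norm (f x)"]
      continuous_on_subset[OF continuous_on_norm[OF assms(1)]] by blast
  have "norm (f y) \<le> norm (f x\<^sub>0)" for y
    using C(2)[of y] x\<^sub>0[of y] x\<^sub>0[OF \<open>x\<^sub>1 \<in> C\<close>] by (cases "y \<in> C") auto
  then show ?thesis by blast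
qed

lemma complex_eq_if_norm_le_Re_cnj_mult:
  fixes c w :: complex
  assumes "norm w \<le> norm c" and "Re (cnj c * w) = (norm c)\<^sup>2"
  shows "w = c"
proof -
  have "(norm (w - c))\<^sup>2 = (norm w)\<^sup>2 - 2 * Re (cnj c * w) + (norm c)\<^sup>2"
    by (simp only: cmod_power2) (simp add: power2_eq_square algebra_simps)
  also have "\<dots> \<le> 0"
    using assms norm_ge_zero[of w] by (simp add: power_mono)
  finally show ?thesis by simp
qed

locale hgroup =
  fixes conv :: "'a::t2_space \<Rightarrow> 'a \<Rightarrow> 'a measure" and invol :: "'a \<Rightarrow> 'a" and e :: 'a
  assumes hypergroup: "hypergroup conv invol e"
begin

lemma sets_conv: "sets (conv x y) = sets borel"
  using hypergroup by (simp add: hypergroup_def)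

lemma prob_space_conv: "prob_space (conv x y)"
  using hypergroup by (simp add: hypergroup_def)

lemma conv_assoc:
  "bcontinuous f \<Longrightarrow>
     (\<integral>z. (\<integral>u. f u \<partial>conv z w) \<partial>conv x y) = (\<integral>z. (\<integral>u. f u \<partial>conv x z) \<partial>conv y w)"
  using hypergroup by (simp add: hypergroup_def)

lemma continuous_on_conv_integral:
  "bcontinuous f \<Longrightarrow> continuous_on UNIV (\<lambda>p. \<integral>z. f z \<partial>conv (fst p) (snd p))"
  using hypergroup by (simp add: hypergroup_def)

lemma conv_e_right: "conv x e = return borel x"
  using hypergroup by (simp add: hypergroup_def)

lemma continuous_on_invol: "continuous_on UNIV invol"
  using hypergroup by (simp add: hypergroup_def)

lemma invol_invol [simp]: "invol (invol x) = x"
  using hypergroup by (simp add: hypergroup_def)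

lemma distr_conv_invol: "distr (conv x y) borel invol = conv (invol y) (invol x)"
  using hypergroup by (simp add: hypergroup_def)

lemma e_in_msupp_conv_invol_iff: "e \<in> msupp (conv x (invol y)) \<longleftrightarrow> x = y"
  using hypergroup by (simp add: hypergroup_def)

lemma msupp_conv_invol:
  assumes "u \<in> msupp (conv b a)"
  shows "invol u \<in> msupp (conv (invol a) (invol b))"
  unfolding msupp_def
proof (intro CollectI allI impI)
  fix U assume U: "open U" "invol u \<in> U"
  have "invol \<in> measurable (conv b a) borel"
    using borel_measurable_continuous_on_UNIV[OF continuous_on_invol sets_conv] .
  then have "emeasure (conv (invol a) (invol b)) U = emeasure (conv b a) (invol -` U)"
    using emeasure_distr[of invol "conv b a" borel U] U(1) distr_conv_invol[of b a]
      sets_eq_imp_space_eq[OF sets_conv] by simp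
  moreover have "open (invol -` U)" using open_vimage[OF U(1) continuous_on_invol] .
  ultimately show "emeasure (conv (invol a) (invol b)) U > 0"
    using assms U(2) unfolding msupp_def by auto
qed

lemma integrable_conv:
  fixes g :: "'a \<Rightarrow> 'b::{banach,second_countable_topology}"
  shows "continuous_on UNIV g \<Longrightarrow> bounded (range g) \<Longrightarrow> integrable (conv x y) g"
  by (rule integrable_bounded_continuous[OF prob_space_conv sets_conv])

lemma norm_integral_conv_le:
  fixes g :: "'a \<Rightarrow> 'b::{banach,second_countable_topology}"
  assumes "continuous_on UNIV g" "\<And>x. norm (g x) \<le> B"
  shows "norm (\<integral>z. g z \<partial>conv x y) \<le> B"
proof -
  interpret prob_space "conv x y" by (rule prob_space_conv)
  have "bounded (range g)" using assms(2) by (auto simp: bounded_iff)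
  with assms show ?thesis by (intro norm_integral_le_const integrable_conv)
qed

definition rhval :: "('a \<Rightarrow> real) \<Rightarrow> 'a \<Rightarrow> 'a \<Rightarrow> real" where
  "rhval h x y = (\<integral>z. h z \<partial>conv x y)"

definition rharmonic :: "'a measure \<Rightarrow> ('a \<Rightarrow> real) \<Rightarrow> bool" where
  "rharmonic \<sigma> h \<longleftrightarrow> (\<forall>x. (\<integral>y. rhval h (invol y) x \<partial>\<sigma>) = h x)"

lemma rhval_nonneg: "(\<And>x. h x \<ge> 0) \<Longrightarrow> rhval h x y \<ge> 0"
  unfolding rhval_def by (rule integral_nonneg_AE) simp

lemma rhval_e_right: "continuous_on UNIV h \<Longrightarrow> rhval h x e = h x"
  unfolding rhval_def conv_e_right
  by (rule integral_return) (auto intro: borel_measurable_continuous_on_UNIV)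

lemma bcontinuous_rhval:
  assumes "bcontinuous h" "continuous_on UNIV a" "continuous_on UNIV b"
  shows "bcontinuous (\<lambda>t. rhval h (a t) (b t))"
proof -
  obtain B where B: "\<And>x. \<bar>h x\<bar> \<le> B" using assms(1) by (auto simp: bcontinuous_def bounded_iff)
  have "continuous_on UNIV (\<lambda>t. rhval h (a t) (b t))"
    using continuous_on_compose2[OF continuous_on_conv_integral[OF assms(1)]
        continuous_on_Pair[OF assms(2,3)]]
    by (simp add: rhval_def)
  moreover have "\<bar>rhval h x y\<bar> \<le> B" for x y
    using norm_integral_conv_le[of h B x y] assms(1) B by (simp add: rhval_def bcontinuous_def)
  ultimately show ?thesis by (auto simp: bcontinuous_def bounded_iff)
qed

lemma rharmonic_const_minus:
  assumes "prob_space \<sigma>" "sets \<sigma> = sets borel" "bcontinuous g" "rharmonic \<sigma> g"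
  shows "rharmonic \<sigma> (\<lambda>x. c - g x)"
  unfolding rharmonic_def
proof
  fix z
  interpret prob_space \<sigma> by fact
  have "rhval (\<lambda>x. c - g x) t z = c - rhval g t z" for t
  proof -
    interpret conv: prob_space "conv t z" by (rule prob_space_conv)
    have "integrable (conv t z) g" using assms(3) by (intro integrable_conv) (auto simp: bcontinuous_def)
    then show ?thesis by (simp add: rhval_def conv.prob_space)
  qed
  moreover have "integrable \<sigma> (\<lambda>y. rhval g (invol y) z)"
    using bcontinuous_rhval[OF assms(3) continuous_on_invol continuous_on_const]
    by (intro integrable_bounded_continuous assms(1,2)) (auto simp: bcontinuous_def)
  ultimately show "(\<integral>y. rhval (\<lambda>x. c - g x) (invol y) z \<partial>\<sigma>) = c - g z"
    using assms(4) by (simp add: rharmonic_def prob_space)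
qed

lemma rharmonic_bounded_linear:
  fixes f :: "'a \<Rightarrow> complex" and T :: "complex \<Rightarrow> real"
  assumes "prob_space \<sigma>" "sets \<sigma> = sets borel"
    and "continuous_on UNIV f" "bounded (range f)" "harmonic conv invol \<sigma> f" "bounded_linear T"
  shows "rharmonic \<sigma> (\<lambda>x. T (f x))"
  unfolding rharmonic_def
proof
  fix z
  interpret prob_space \<sigma> by fact
  define F where "F y = hval conv f (invol y) z" for y
  have "F \<in> borel_measurable \<sigma>"
  proof -
    have "(\<lambda>y. Re (F y)) = (\<lambda>y. rhval (\<lambda>x. Re (f x)) (invol y) z)"
      "(\<lambda>y. Im (F y)) = (\<lambda>y. rhval (\<lambda>x. Im (f x)) (invol y) z)"
      by (simp_all add: F_def hval_def rhval_def integrable_conv[OF assms(3,4)])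
    moreover have "bcontinuous (\<lambda>x. Re (f x))" "bcontinuous (\<lambda>x. Im (f x))"
      using bcontinuous_bounded_linear_comp[OF assms(3,4)] bounded_linear_Re bounded_linear_Im
      by auto
    ultimately show ?thesis
      unfolding borel_measurable_complex_iff
      using bcontinuous_rhval[OF _ continuous_on_invol continuous_on_const]
      by (auto intro!: borel_measurable_continuous_on_UNIV[OF _ assms(2)] simp: bcontinuous_def)
  qed
  moreover obtain B where "\<And>x. norm (f x) \<le> B" using assms(4) by (auto simp: bounded_iff)
  ultimately have "integrable \<sigma> F"
    using norm_integral_conv_le[OF assms(3)]
    by (intro integrable_const_bound[where B=B]) (auto simp: F_def hval_def)
  have "rhval (\<lambda>x. T (f x)) (invol y) z = T (F y)" for y
    unfolding rhval_def F_def hval_def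
    by (rule integral_bounded_linear[OF assms(6) integrable_conv[OF assms(3,4)]])
  then have "(\<integral>y. rhval (\<lambda>x. T (f x)) (invol y) z \<partial>\<sigma>) = T (\<integral>y. F y \<partial>\<sigma>)"
    using integral_bounded_linear[OF assms(6) \<open>integrable \<sigma> F\<close>] by simp
  also have "(\<integral>y. F y \<partial>\<sigma>) = f z"
    using assms(5) by (simp add: harmonic_def F_def)
  finally show "(\<integral>y. rhval (\<lambda>x. T (f x)) (invol y) z \<partial>\<sigma>) = T (f z)" .
qed

text \<open>For nonnegative \<open>h\<close> with zero set \<open>Z\<close>, these are the \<open>t\<close> with \<open>{t} * Z \<subseteq> Z\<close>.\<close>

definition zero_set_stabilizer :: "('a \<Rightarrow> real) \<Rightarrow> 'a set" where
  "zero_set_stabilizer h = {t. \<forall>z. h z = 0 \<longrightarrow> rhval h t z = 0}"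

context
  fixes h :: "'a \<Rightarrow> real"
  assumes bcontinuous: "bcontinuous h" and nonneg: "\<And>x. h x \<ge> 0"
begin

lemma closed_zero_set_stabilizer: "closed (zero_set_stabilizer h)"
proof -
  have "zero_set_stabilizer h = (\<Inter>z\<in>{z. h z = 0}. {t. rhval h t z = 0})"
    by (auto simp: zero_set_stabilizer_def)
  moreover have "closed {t. rhval h t z = 0}" for z
    using bcontinuous_rhval[OF bcontinuous continuous_on_id continuous_on_const]
    by (intro closed_Collect_eq continuous_on_const) (auto simp: bcontinuous_def)
  ultimately show ?thesis by auto
qed

lemma invol_msupp_in_zero_set_stabilizer:
  assumes "prob_space \<sigma>" "sets \<sigma> = sets borel" "rharmonic \<sigma> h" "a \<in> msupp \<sigma>"
  shows "invol a \<in> zero_set_stabilizer h"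
  unfolding zero_set_stabilizer_def
proof (intro CollectI allI impI)
  fix z assume "h z = 0"
  with assms(3) have "(\<integral>y. rhval h (invol y) z \<partial>\<sigma>) = 0" by (simp add: rharmonic_def)
  then show "rhval h (invol a) z = 0"
    by (rule bcontinuous_vanishes_on_msupp[OF assms(1,2)
          bcontinuous_rhval[OF bcontinuous continuous_on_invol continuous_on_const]
          rhval_nonneg[OF nonneg] _ assms(4)])
qed

lemma msupp_conv_in_zero_set_stabilizer:
  assumes "t\<^sub>1 \<in> zero_set_stabilizer h" "t\<^sub>2 \<in> zero_set_stabilizer h" "s \<in> msupp (conv t\<^sub>1 t\<^sub>2)"
  shows "s \<in> zero_set_stabilizer h"
  unfolding zero_set_stabilizer_def
proof (intro CollectI allI impI)
  fix z assume "h z = 0"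
  have "integrable (conv t\<^sub>2 z) h"
    using bcontinuous by (intro integrable_conv) (auto simp: bcontinuous_def)
  moreover have "integral\<^sup>L (conv t\<^sub>2 z) h = 0"
    using assms(2) \<open>h z = 0\<close> by (simp add: zero_set_stabilizer_def rhval_def)
  ultimately have "AE u in conv t\<^sub>2 z. h u = 0"
    using integral_nonneg_eq_0_iff_AE[of "conv t\<^sub>2 z" h] nonneg by auto
  then have "AE u in conv t\<^sub>2 z. rhval h t\<^sub>1 u = 0"
    by eventually_elim (use assms(1) in \<open>simp add: zero_set_stabilizer_def\<close>)
  then have "(\<integral>u. rhval h t\<^sub>1 u \<partial>conv t\<^sub>2 z) = 0" by (rule integral_eq_zero_AE)
  then have "(\<integral>t. rhval h t z \<partial>conv t\<^sub>1 t\<^sub>2) = 0"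
    using conv_assoc[OF bcontinuous, where x=t\<^sub>1 and y=t\<^sub>2 and w=z] by (simp add: rhval_def)
  then show "rhval h s z = 0"
    by (rule bcontinuous_vanishes_on_msupp[OF prob_space_conv sets_conv
          bcontinuous_rhval[OF bcontinuous continuous_on_id continuous_on_const]
          rhval_nonneg[OF nonneg] _ assms(3)])
qed

lemma invol_hset_pow_in_zero_set_stabilizer:
  assumes "prob_space \<sigma>" "sets \<sigma> = sets borel" "rharmonic \<sigma> h"
  shows "b \<in> hset_pow conv (msupp \<sigma>) (Suc n) \<Longrightarrow> invol b \<in> zero_set_stabilizer h"
proof (induction n arbitrary: b)
  case 0
  then show ?case using invol_msupp_in_zero_set_stabilizer[OF assms] by simp
next
  case (Suc n)
  then obtain b' a where "b' \<in> hset_pow conv (msupp \<sigma>) (Suc n)" "a \<in> msupp \<sigma>" "b \<in> msupp (conv b' a)"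
    by (auto simp: hset_prod_def)
  then show ?case
    using Suc.IH invol_msupp_in_zero_set_stabilizer[OF assms] msupp_conv_invol
      msupp_conv_in_zero_set_stabilizer by blast
qed

lemma zero_set_stabilizer_eq_UNIV:
  assumes "prob_space \<sigma>" "sets \<sigma> = sets borel" "rharmonic \<sigma> h" "nondegenerate conv \<sigma>"
  shows "zero_set_stabilizer h = UNIV"
proof -
  have "(\<Union>n\<in>{1..}. hset_pow conv (msupp \<sigma>) n) \<subseteq> invol -` zero_set_stabilizer h"
  proof
    fix b assume "b \<in> (\<Union>n\<in>{1..}. hset_pow conv (msupp \<sigma>) n)"
    then obtain n where "n \<ge> 1" "b \<in> hset_pow conv (msupp \<sigma>) n" by auto
    then show "b \<in> invol -` zero_set_stabilizer h"
      using invol_hset_pow_in_zero_set_stabilizer[OF assms(1-3), of b "n - 1"] by simp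
  qed
  then have "closure (\<Union>n\<in>{1..}. hset_pow conv (msupp \<sigma>) n) \<subseteq> invol -` zero_set_stabilizer h"
    by (intro closure_minimal closed_vimage closed_zero_set_stabilizer continuous_on_invol)
  with assms(4) have "invol t \<in> zero_set_stabilizer h" for t by (auto simp: nondegenerate_def)
  then show ?thesis by (metis UNIV_eq_I invol_invol)
qed

lemma rharmonic_nonneg_zero_imp_zero:
  assumes "prob_space \<sigma>" "sets \<sigma> = sets borel" "rharmonic \<sigma> h" "nondegenerate conv \<sigma>"
    and "h x\<^sub>0 = 0"
  shows "h x = 0"
proof -
  have "rhval h t x\<^sub>0 = 0" for t
    using zero_set_stabilizer_eq_UNIV[OF assms(1-4)] assms(5) by (auto simp: zero_set_stabilizer_def)
  then have "(\<integral>u. rhval h x u \<partial>conv (invol x\<^sub>0) x\<^sub>0) = 0"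
    using conv_assoc[OF bcontinuous, where x=x and y="invol x\<^sub>0" and w=x\<^sub>0] by (simp add: rhval_def)
  moreover have "e \<in> msupp (conv (invol x\<^sub>0) x\<^sub>0)"
    using e_in_msupp_conv_invol_iff[of "invol x\<^sub>0" "invol x\<^sub>0"] by simp
  ultimately have "rhval h x e = 0"
    by (rule bcontinuous_vanishes_on_msupp[OF prob_space_conv sets_conv
          bcontinuous_rhval[OF bcontinuous continuous_on_const continuous_on_id]
          rhval_nonneg[OF nonneg]])
  then show ?thesis using rhval_e_right bcontinuous by (simp add: bcontinuous_def)
qed

end

lemma rharmonic_attains_max_imp_const:
  assumes "prob_space \<sigma>" "sets \<sigma> = sets borel" "nondegenerate conv \<sigma>"
    and "bcontinuous g" "rharmonic \<sigma> g" "\<And>y. g y \<le> g x\<^sub>0"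
  shows "g x = g x\<^sub>0"
proof -
  have "bcontinuous (\<lambda>y. g x\<^sub>0 - g y)"
    using assms(4) bounded_minus_comp[of "\<lambda>_. g x\<^sub>0" UNIV g]
    by (auto simp: bcontinuous_def intro: continuous_intros)
  then have "g x\<^sub>0 - g x = 0"
    by (rule rharmonic_nonneg_zero_imp_zero[OF _ _ assms(1,2)
          rharmonic_const_minus[OF assms(1,2,4,5)] assms(3)]) (use assms(6) in auto)
  then show ?thesis by simp
qed

end

theorem theorem4p7:
  fixes conv :: "'a::t2_space \<Rightarrow> 'a \<Rightarrow> 'a measure"
    and invol :: "'a \<Rightarrow> 'a" and e :: 'a
    and haar \<sigma> :: "'a measure" and f :: "'a \<Rightarrow> complex"
  assumes "hypergroup conv invol e"
    and "left_haar conv haar"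
    and "prob_space \<sigma>" and "sets \<sigma> = sets borel"
    and "nondegenerate conv \<sigma>"
    and "continuous_on UNIV f" and "bounded (range f)"
    and "harmonic conv invol \<sigma> f"
    and "vanishes_at_infinity f"
  shows "\<exists>c. \<forall>x. f x = c"
proof -
  interpret hgroup conv invol e by (rule hgroup.intro) fact
  obtain x\<^sub>0 where max: "\<And>y. norm (f y) \<le> norm (f x\<^sub>0)"
    using vanishes_at_infinity_norm_attains_max[OF assms(6,9)] by blast
  define c where "c = f x\<^sub>0"
  define T where "T w = Re (cnj c * w)" for w
  have T: "bounded_linear T"
    unfolding T_def by (intro bounded_linear_compose[OF bounded_linear_Re] bounded_linear_mult_right)
  have T_c: "T c = (norm c)\<^sup>2"
    unfolding T_def cmod_power2 by (simp add: power2_eq_square)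
  have "T (f y) \<le> T c" for y
  proof -
    have "T (f y) \<le> norm c * norm (f y)"
      unfolding T_def by (metis complex_Re_le_cmod norm_mult complex_mod_cnj)
    also have "\<dots> \<le> (norm c)\<^sup>2"
      using max[of y] by (simp add: c_def power2_eq_square mult_left_mono)
    finally show ?thesis by (simp only: T_c)
  qed
  then have T_const: "T (f y) = T c" for y
    using rharmonic_attains_max_imp_const[OF assms(3-5) bcontinuous_bounded_linear_comp[OF assms(6,7) T]
        rharmonic_bounded_linear[OF assms(3,4,6-8) T], of x\<^sub>0 y]
    unfolding c_def by blast
  have "f y = c" for y
  proof (rule complex_eq_if_norm_le_Re_cnj_mult)
    show "norm (f y) \<le> norm c" using max[of y] unfolding c_def .
    show "Re (cnj c * f y) = (norm c)\<^sup>2" using T_const[of y] T_c unfolding T_def by simp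
  qed
  then show ?thesis by blast
qed

end
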